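(* In the semi-classical setting, with $\Theta_n,\Omega_n$ the polynomials defined in the context, for every $n\ge 1$: $$W p_n' = (\Omega_n - V)p_n - a_n\Theta_n p_{n-1},\qquad W p_{n-1}' = a_n\Theta_{n-1}p_n - (\Omega_n+V)p_{n-1},$$ $$W \varepsilon_n' = (\Omega_n + V)\varepsilon_n - a_n\Theta_n \varepsilon_{n-1},\qquad W \varepsilon_{n-1}' = a_n\Theta_{n-1}\varepsilon_n - (\Omega_n-V)\varepsilon_{n-1}.$$
   Context: Let $(\mu_k)_{k\ge 0}$ be complex numbers such that all Hankel determinants $\det(\mu_{i+j})_{0\le i,j\le n}$ are nonzero; $\mathcal L(x^k)=\mu_k$; $p_n(z)=\gamma_n z^n+\cdots$ ($\gamma_n\ne0$) orthonormal: $\mathcal L(p_np_m)=\delta_{n,m}$; recurrence $a_{n+1}p_{n+1}(z)=(z-b_n)p_n(z)-a_np_{n-1}(z)$, $p_{-1}=0$, $a_n=\gamma_{n-1}/\gamma_n$. $f(z)=\sum_{k\ge0}\mu_k z^{-k-1}$ (formal series); $p^{(1)}_{n-1}$ is the polynomial part of $fp_n$ and $\varepsilon_n=fp_n-p^{(1)}_{n-1}$. Semi-classical: polynomials $W\not\equiv0,V,U$ with $Wf'=2Vf+U$. For $n\ge1$, $\Theta_n = W(\varepsilon_n p_n' - \varepsilon_n' p_n) + 2V\varepsilon_n p_n$ and $\Omega_n = a_n W(\varepsilon_{n-1}p_n' - \varepsilon_n' p_{n-1}) + a_n V(\varepsilon_{n-1}p_n + \varepsilon_n p_{n-1})$; these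 are polynomials in $z$. $\Theta_0$ is defined by the same formula with $n=0$. Primes denote $d/dz$. *)

theory Defs
  imports "HOL-Computational_Algebra.Formal_Laurent_Series"
          "Jordan_Normal_Form.Determinant"
begin

text \<open>Formal series in the variable z are represented as formal Laurent series
  in w = 1/z (type complex fls): a polynomial in z has finitely many negative
  powers of w, and f(z) = sum mu_k z^(-k-1) is a power series in w.\<close>

definition zpoly :: "complex poly \<Rightarrow> complex fls" where
  "zpoly p = (\<Sum>k\<le>degree p. fls_const (coeff p k) * fls_X_inv ^ k)"

text \<open>d/dz = -w^2 d/dw\<close>
definition zderiv :: "complex fls \<Rightarrow> complex fls" where
  "zderiv F = - (fls_X ^ 2 * fls_deriv F)"

text \<open>Polynomial part (in z) of a series: the terms z^k, k >= 0.\<close>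
definition zpoly_part :: "complex fls \<Rightarrow> complex poly" where
  "zpoly_part F = fls_prpart F + [: fls_nth F 0 :]"

definition stieltjes :: "(nat \<Rightarrow> complex) \<Rightarrow> complex fls" where
  "stieltjes \<mu> = fls_X * fps_to_fls (Abs_fps \<mu>)"

definition Lfun :: "(nat \<Rightarrow> complex) \<Rightarrow> complex poly \<Rightarrow> complex" where
  "Lfun \<mu> q = (\<Sum>k\<le>degree q. coeff q k * \<mu> k)"

definition hankel_det :: "(nat \<Rightarrow> complex) \<Rightarrow> nat \<Rightarrow> complex" where
  "hankel_det \<mu> n = det (mat (n+1) (n+1) (\<lambda>(i,j). \<mu> (i+j)))"

text \<open>epsilon_n = f p_n - p^(1)_(n-1)\<close>
definition eps :: "(nat \<Rightarrow> complex) \<Rightarrow> (nat \<Rightarrow> complex poly) \<Rightarrow> nat \<Rightarrow> complex fls" where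
  "eps \<mu> p n = stieltjes \<mu> * zpoly (p n) - zpoly (zpoly_part (stieltjes \<mu> * zpoly (p n)))"

definition acoef :: "(nat \<Rightarrow> complex poly) \<Rightarrow> nat \<Rightarrow> complex" where
  "acoef p n = lead_coeff (p (n-1)) / lead_coeff (p n)"

definition Theta :: "(nat \<Rightarrow> complex) \<Rightarrow> (nat \<Rightarrow> complex poly) \<Rightarrow> complex poly \<Rightarrow> complex poly
   \<Rightarrow> nat \<Rightarrow> complex fls" where
  "Theta \<mu> p W V n =
     zpoly W * (eps \<mu> p n * zderiv (zpoly (p n)) - zderiv (eps \<mu> p n) * zpoly (p n))
     + 2 * zpoly V * eps \<mu> p n * zpoly (p n)"

definition Omega :: "(nat \<Rightarrow> complex) \<Rightarrow> (nat \<Rightarrow> complex poly) \<Rightarrow> complex poly \<Rightarrow> complex poly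
   \<Rightarrow> nat \<Rightarrow> complex fls" where
  "Omega \<mu> p W V n =
     fls_const (acoef p n) * zpoly W *
        (eps \<mu> p (n-1) * zderiv (zpoly (p n)) - zderiv (eps \<mu> p n) * zpoly (p (n-1)))
     + fls_const (acoef p n) * zpoly V *
        (eps \<mu> p (n-1) * zpoly (p n) + eps \<mu> p n * zpoly (p (n-1)))"

end

theory Submission
  imports Defs
begin

text \<open>With \<open>\<gamma>\<^sub>n\<close> the leading coefficient of \<open>p\<^sub>n\<close>, the Casoratian
  \<open>a\<^sub>n (\<epsilon>\<^bsub>n-1\<^esub> p\<^sub>n - \<epsilon>\<^sub>n p\<^bsub>n-1\<^esub>)\<close> equals 1: the \<open>f\<close>-parts of the two
  products cancel, so it is a polynomial in \<open>z\<close>, while orthogonality gives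
  \<open>\<epsilon>\<^sub>n = z\<^bsup>-n-1\<^esup>/\<gamma>\<^sub>n + O(z\<^bsup>-n-2\<^esup>)\<close>, so it is \<open>1 + O(1/z)\<close>. Hence its
  derivative vanishes too, and each of the four identities is a ring-theoretic
  consequence of these two relations.\<close>

lemma zpoly_nth: "fls_nth (zpoly q) m = (if m \<le> 0 then coeff q (nat (-m)) else 0)"
proof -
  have "fls_nth (zpoly q) m = (\<Sum>k\<le>degree q. coeff q k * (if m = - int k then 1 else 0))"
    unfolding zpoly_def fls_nth_sum by simp
  also have "\<dots> = (\<Sum>k\<le>degree q. if k = nat (-m) \<and> m \<le> 0 then coeff q k else 0)"
    by (rule sum.cong) auto
  also have "\<dots> = (if m \<le> 0 then coeff q (nat (-m)) else 0)"
    by (auto simp: sum.delta coeff_eq_0)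
  finally show ?thesis .
qed

lemma zpoly_nth_below_degree: "m < - int (degree q) \<Longrightarrow> fls_nth (zpoly q) m = 0"
  by (auto simp: zpoly_nth coeff_eq_0)

lemma zpoly_nth_degree: "fls_nth (zpoly q) (- int (degree q)) = lead_coeff q"
  by (simp add: zpoly_nth)

lemma zpoly_zpoly_part_nth: "m \<le> 0 \<Longrightarrow> fls_nth (zpoly (zpoly_part F)) m = fls_nth F m"
  by (auto simp: zpoly_nth zpoly_part_def coeff_pCons split: nat.splits)

lemma zpoly_times_zpoly_nth_pos:
  assumes "m > 0"
  shows "fls_nth (zpoly q * zpoly r) m = 0"
  unfolding fls_times_nth(2) using assms by (intro sum.neutral) (auto simp: zpoly_nth)

lemma fls_times_nth_from_bounds:
  fixes F G :: "'a :: comm_ring_1 fls"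
  assumes "\<And>i. i < a \<Longrightarrow> fls_nth F i = 0" and "\<And>j. j < b \<Longrightarrow> fls_nth G j = 0"
  shows "fls_nth (F * G) k = (\<Sum>i=a..k - b. fls_nth F i * fls_nth G (k - i))"
proof (cases "F = 0 \<or> G = 0")
  case True
  then show ?thesis by auto
next
  case False
  then have "a \<le> fls_subdegree F" "b \<le> fls_subdegree G"
    using assms by (auto intro: fls_subdegree_geI)
  then show ?thesis
    unfolding fls_times_nth(2) by (intro sum.mono_neutral_left) auto
qed

lemma fls_times_nth_eq0_below_bounds:
  fixes F G :: "'a :: comm_ring_1 fls"
  assumes "\<And>i. i < a \<Longrightarrow> fls_nth F i = 0" and "\<And>j. j < b \<Longrightarrow> fls_nth G j = 0" and "k < a + b"
  shows "fls_nth (F * G) k = 0"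
  using fls_times_nth_from_bounds[where a = a and b = b, OF assms(1,2)] assms(3) by simp

lemma fls_times_nth_at_sum_bounds:
  fixes F G :: "'a :: comm_ring_1 fls"
  assumes "\<And>i. i < a \<Longrightarrow> fls_nth F i = 0" and "\<And>j. j < b \<Longrightarrow> fls_nth G j = 0"
  shows "fls_nth (F * G) (a + b) = fls_nth F a * fls_nth G b"
  using fls_times_nth_from_bounds[where a = a and b = b, OF assms] by simp

lemma stieltjes_nth: "fls_nth (stieltjes \<mu>) m = (if m \<ge> 1 then \<mu> (nat (m - 1)) else 0)"
  unfolding stieltjes_def fls_X_times_conv_shift by auto

lemma Lfun_eq_sum_atMost: "degree q \<le> N \<Longrightarrow> Lfun \<mu> q = (\<Sum>k\<le>N. coeff q k * \<mu> k)"
  unfolding Lfun_def by (rule sum.mono_neutral_left) (auto simp: coeff_eq_0)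

lemma Lfun_0 [simp]: "Lfun \<mu> 0 = 0"
  by (simp add: Lfun_def)

lemma Lfun_add: "Lfun \<mu> (q + r) = Lfun \<mu> q + Lfun \<mu> r"
proof -
  define N where "N = max (degree q) (degree r)"
  have "degree q \<le> N" "degree r \<le> N" "degree (q + r) \<le> N"
    by (auto simp: N_def degree_add_le)
  then show ?thesis
    by (simp add: Lfun_eq_sum_atMost[of _ N] sum.distrib distrib_right)
qed

lemma Lfun_smult: "Lfun \<mu> (Polynomial.smult c q) = c * Lfun \<mu> q"
  unfolding Lfun_def by (simp add: sum_distrib_left mult.assoc)

lemma Lfun_monom_mult: "Lfun \<mu> (monom 1 j * q) = (\<Sum>k\<le>degree q. coeff q k * \<mu> (j + k))"
proof -
  have "degree (monom 1 j * q) \<le> j + degree q"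
    using degree_mult_le[of "monom 1 j" q] by (simp add: degree_monom_eq)
  then have "Lfun \<mu> (monom 1 j * q) = (\<Sum>k\<le>j + degree q. coeff (monom 1 j * q) k * \<mu> k)"
    by (rule Lfun_eq_sum_atMost)
  also have "\<dots> = (\<Sum>k=0 + j..degree q + j. coeff q (k - j) * \<mu> k)"
    by (rule sum.mono_neutral_cong_right) (auto simp: coeff_monom_mult)
  also have "\<dots> = (\<Sum>k\<le>degree q. coeff q k * \<mu> (j + k))"
    unfolding sum.shift_bounds_cl_nat_ivl by (simp add: atLeast0AtMost add.commute)
  finally show ?thesis .
qed

lemma stieltjes_times_zpoly_nth:
  "fls_nth (stieltjes \<mu> * zpoly q) (int j + 1) = Lfun \<mu> (monom 1 j * q)"
proof -
  have "stieltjes \<mu> * (fls_const c * fls_X_inv ^ k) = fls_const c * (fls_X_inv ^ k * stieltjes \<mu>)"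
    for c k by (simp only: mult_ac)
  then have "fls_nth (stieltjes \<mu> * zpoly q) (int j + 1)
      = (\<Sum>k\<le>degree q. coeff q k * fls_nth (stieltjes \<mu>) (int j + 1 + int k))"
    unfolding zpoly_def sum_distrib_left fls_nth_sum
    by (simp only: fls_mult_const_nth fls_X_inv_power_times_conv_shift fls_shift_nth)
  also have "\<dots> = Lfun \<mu> (monom 1 j * q)"
    unfolding Lfun_monom_mult stieltjes_nth by (intro sum.cong) (auto simp: nat_add_distrib)
  finally show ?thesis .
qed

lemma eps_nth_nonpos: "m \<le> 0 \<Longrightarrow> fls_nth (eps \<mu> p n) m = 0"
  by (simp add: eps_def zpoly_zpoly_part_nth)

lemma eps_nth_pos: "fls_nth (eps \<mu> p n) (int j + 1) = Lfun \<mu> (monom 1 j * p n)"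
  by (simp add: eps_def zpoly_nth stieltjes_times_zpoly_nth)

lemma casoratian_nth_pos:
  assumes "m > 0"
  shows "fls_nth (eps \<mu> p k * zpoly (p n) - eps \<mu> p n * zpoly (p k)) m = 0"
proof -
  define S where "S = stieltjes \<mu>"
  have "eps \<mu> p k * zpoly (p n) - eps \<mu> p n * zpoly (p k)
      = zpoly (zpoly_part (S * zpoly (p n))) * zpoly (p k)
        - zpoly (zpoly_part (S * zpoly (p k))) * zpoly (p n)"
    by (simp add: eps_def S_def algebra_simps)
  then show ?thesis
    using assms by (simp add: zpoly_times_zpoly_nth_pos)
qed

locale orthonormal_polys =
  fixes \<mu> :: "nat \<Rightarrow> complex" and p :: "nat \<Rightarrow> complex poly"
  assumes degree_p: "degree (p m) = m"
    and orthonormal: "Lfun \<mu> (p m * p k) = (if m = k then 1 else 0)"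
begin

lemma lead_coeff_p_nonzero: "lead_coeff (p m) \<noteq> 0"
  using orthonormal[of m m] by auto

lemma Lfun_times_p_eq_0:
  assumes "\<forall>k\<ge>d. coeff q k = 0" and "d \<le> n"
  shows "Lfun \<mu> (q * p n) = 0"
  using assms
proof (induction d arbitrary: q)
  case 0
  then have "q = 0" by (intro poly_eqI) simp
  then show ?case by simp
next
  case (Suc d)
  define c where "c = coeff q d / lead_coeff (p d)"
  define r where "r = q - Polynomial.smult c (p d)"
  have "coeff r k = 0" if "k \<ge> d" for k
    using that Suc.prems(1) lead_coeff_p_nonzero[of d] degree_p[of d]
    by (cases "k = d") (auto simp: r_def c_def coeff_eq_0)
  then have "Lfun \<mu> (r * p n) = 0"
    using Suc.IH Suc.prems(2) by simp
  moreover have "q * p n = r * p n + Polynomial.smult c (p d * p n)"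
    by (simp add: r_def algebra_simps)
  ultimately show ?case
    using orthonormal[of d n] Suc.prems(2) by (simp add: Lfun_add Lfun_smult)
qed

lemma Lfun_monom_times_p_below: "j < n \<Longrightarrow> Lfun \<mu> (monom 1 j * p n) = 0"
  by (rule Lfun_times_p_eq_0[of "Suc j"]) (auto simp: coeff_monom)

lemma Lfun_monom_times_p: "Lfun \<mu> (monom 1 n * p n) = 1 / lead_coeff (p n)"
proof -
  define g where "g = lead_coeff (p n)"
  define r where "r = p n - Polynomial.smult g (monom 1 n)"
  have "coeff r k = 0" if "k \<ge> n" for k
    using that degree_p[of n]
    by (cases "k = n") (auto simp: r_def g_def coeff_eq_0 coeff_monom)
  then have "Lfun \<mu> (r * p n) = 0"
    by (intro Lfun_times_p_eq_0[of n]) auto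
  moreover have "p n * p n = r * p n + Polynomial.smult g (monom 1 n * p n)"
    by (simp add: r_def algebra_simps)
  ultimately have "g * Lfun \<mu> (monom 1 n * p n) = 1"
    using orthonormal[of n n] by (simp add: Lfun_add Lfun_smult)
  then show ?thesis
    using lead_coeff_p_nonzero[of n] by (simp add: g_def field_simps)
qed

lemma eps_nth_below: "m \<le> int n \<Longrightarrow> fls_nth (eps \<mu> p n) m = 0"
proof (cases "m \<le> 0")
  case False
  moreover assume "m \<le> int n"
  ultimately have "m = int (nat (m - 1)) + 1" "nat (m - 1) < n"
    by auto
  then show ?thesis
    by (metis eps_nth_pos Lfun_monom_times_p_below)
qed (simp add: eps_nth_nonpos)

lemma eps_nth_order: "fls_nth (eps \<mu> p n) (int n + 1) = 1 / lead_coeff (p n)"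
  by (simp add: eps_nth_pos Lfun_monom_times_p)

lemma eps_times_zpoly_nth_below:
  assumes "m < int n + 1 - int (degree q)"
  shows "fls_nth (eps \<mu> p n * zpoly q) m = 0"
  by (rule fls_times_nth_eq0_below_bounds[where a = "int n + 1" and b = "- int (degree q)"])
    (use assms in \<open>auto simp: eps_nth_below zpoly_nth_below_degree\<close>)

lemma eps_times_zpoly_nth_order:
  "fls_nth (eps \<mu> p n * zpoly q) (int n + 1 - int (degree q)) = lead_coeff q / lead_coeff (p n)"
proof -
  have "fls_nth (eps \<mu> p n * zpoly q) (int n + 1 + - int (degree q))
      = fls_nth (eps \<mu> p n) (int n + 1) * fls_nth (zpoly q) (- int (degree q))"
    by (rule fls_times_nth_at_sum_bounds) (auto simp: eps_nth_below zpoly_nth_below_degree)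
  then show ?thesis
    by (simp add: eps_nth_order zpoly_nth_degree)
qed

lemma casoratian_eq_1:
  assumes "n \<ge> 1"
  shows "fls_const (acoef p n) * (eps \<mu> p (n-1) * zpoly (p n) - eps \<mu> p n * zpoly (p (n-1))) = 1"
proof -
  obtain k where n: "n = Suc k"
    using assms by (cases n) auto
  have "fls_nth (eps \<mu> p k * zpoly (p n) - eps \<mu> p n * zpoly (p k)) m
      = (if m = 0 then lead_coeff (p n) / lead_coeff (p k) else 0)" for m
  proof (cases "m > 0")
    case True
    then show ?thesis
      using casoratian_nth_pos[OF True, of \<mu> p k n] by simp
  next
    case False
    then have "fls_nth (eps \<mu> p n * zpoly (p k)) m = 0"
      by (intro eps_times_zpoly_nth_below) (simp add: degree_p n)
    moreover have "fls_nth (eps \<mu> p k * zpoly (p n)) m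
        = (if m = 0 then lead_coeff (p n) / lead_coeff (p k) else 0)"
      using False eps_times_zpoly_nth_order[of k "p n"] eps_times_zpoly_nth_below[of m k "p n"]
      by (auto simp: degree_p n)
    ultimately show ?thesis by simp
  qed
  then show ?thesis
    using lead_coeff_p_nonzero[of n] lead_coeff_p_nonzero[of k]
    by (simp add: fls_eq_iff acoef_def n)
qed

end

lemma zderiv_mult: "zderiv (F * G) = F * zderiv G + zderiv F * G"
  unfolding zderiv_def by (simp add: algebra_simps)

lemma zderiv_diff: "zderiv (F - G) = zderiv F - zderiv G"
  unfolding zderiv_def by (simp add: algebra_simps)

lemma zderiv_fls_const: "zderiv (fls_const c) = 0"
  unfolding zderiv_def by simp

lemma casoratian_one_imp_derivatives:
  fixes A W V P Q E F P' Q' E' F' :: "'a::comm_ring_1"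
  defines "\<Theta> \<equiv> W * (E * P' - E' * P) + 2 * V * E * P"
    and "\<Theta>\<^sub>1 \<equiv> W * (F * Q' - F' * Q) + 2 * V * F * Q"
    and "\<Omega> \<equiv> A * W * (F * P' - E' * Q) + A * V * (F * P + E * Q)"
    and "D \<equiv> A * (F * P - E * Q)"
    and "D' \<equiv> A * (F' * P + F * P' - E' * Q - E * Q')"
  assumes "D = 1" and "D' = 0"
  shows "W * P' = (\<Omega> - V) * P - A * \<Theta> * Q"
    and "W * Q' = A * \<Theta>\<^sub>1 * P - (\<Omega> + V) * Q"
    and "W * E' = (\<Omega> + V) * E - A * \<Theta> * F"
    and "W * F' = A * \<Theta>\<^sub>1 * E - (\<Omega> - V) * F"
proof -
  have "(\<Omega> - V) * P - A * \<Theta> * Q = (W * P' + V * P) * D - V * P"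
    by (simp add: assms(1-4) algebra_simps)
  then show "W * P' = (\<Omega> - V) * P - A * \<Theta> * Q"
    using \<open>D = 1\<close> by simp
  have "A * \<Theta>\<^sub>1 * P - (\<Omega> + V) * Q = (W * Q' + V * Q) * D - W * Q * D' - V * Q"
    by (simp add: assms(2-5) algebra_simps)
  then show "W * Q' = A * \<Theta>\<^sub>1 * P - (\<Omega> + V) * Q"
    using \<open>D = 1\<close> \<open>D' = 0\<close> by simp
  have "(\<Omega> + V) * E - A * \<Theta> * F = (W * E' - V * E) * D + V * E"
    by (simp add: assms(1,3,4) algebra_simps)
  then show "W * E' = (\<Omega> + V) * E - A * \<Theta> * F"
    using \<open>D = 1\<close> by simp
  have "A * \<Theta>\<^sub>1 * E - (\<Omega> - V) * F = (W * F' - V * F) * D - W * F * D' + V * F"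
    by (simp add: assms(2-5) algebra_simps)
  then show "W * F' = A * \<Theta>\<^sub>1 * E - (\<Omega> - V) * F"
    using \<open>D = 1\<close> \<open>D' = 0\<close> by simp
qed

theorem mainTheorem2:
  fixes \<mu> :: "nat \<Rightarrow> complex" and p :: "nat \<Rightarrow> complex poly"
    and W V U :: "complex poly" and n :: nat
  assumes hankel: "\<And>m. hankel_det \<mu> m \<noteq> 0"
    and deg: "\<And>m. degree (p m) = m"
    and orth: "\<And>m k. Lfun \<mu> (p m * p k) = (if m = k then 1 else 0)"
    and W_nz: "W \<noteq> 0"
    and semiclassical: "zpoly W * zderiv (stieltjes \<mu>) = 2 * zpoly V * stieltjes \<mu> + zpoly U"
    and n: "n \<ge> 1"
  shows
    "zpoly W * zderiv (zpoly (p n)) =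
       (Omega \<mu> p W V n - zpoly V) * zpoly (p n)
       - fls_const (acoef p n) * Theta \<mu> p W V n * zpoly (p (n-1))
   \<and> zpoly W * zderiv (zpoly (p (n-1))) =
       fls_const (acoef p n) * Theta \<mu> p W V (n-1) * zpoly (p n)
       - (Omega \<mu> p W V n + zpoly V) * zpoly (p (n-1))
   \<and> zpoly W * zderiv (eps \<mu> p n) =
       (Omega \<mu> p W V n + zpoly V) * eps \<mu> p n
       - fls_const (acoef p n) * Theta \<mu> p W V n * eps \<mu> p (n-1)
   \<and> zpoly W * zderiv (eps \<mu> p (n-1)) =
       fls_const (acoef p n) * Theta \<mu> p W V (n-1) * eps \<mu> p n
       - (Omega \<mu> p W V n - zpoly V) * eps \<mu> p (n-1)"
proof -
  \<comment> \<open>Only orthonormality is needed: semi-classicality is what makes \<open>\<Theta>\<^sub>n\<close> and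
    \<open>\<Omega>\<^sub>n\<close> polynomials, which the identities themselves do not require.\<close>
  interpret orthonormal_polys \<mu> p
    using deg orth by unfold_locales
  let ?C = "fls_const (acoef p n) * (eps \<mu> p (n-1) * zpoly (p n) - eps \<mu> p n * zpoly (p (n-1)))"
  have C: "?C = 1"
    using n by (rule casoratian_eq_1)
  then have "zderiv ?C = 0"
    by (simp add: zderiv_fls_const flip: fls_const_1)
  then have C': "fls_const (acoef p n) * (zderiv (eps \<mu> p (n-1)) * zpoly (p n)
      + eps \<mu> p (n-1) * zderiv (zpoly (p n)) - zderiv (eps \<mu> p n) * zpoly (p (n-1))
      - eps \<mu> p n * zderiv (zpoly (p (n-1)))) = 0"
    by (simp add: zderiv_fls_const zderiv_diff zderiv_mult algebra_simps)
  show ?thesis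
    unfolding Omega_def Theta_def
    using casoratian_one_imp_derivatives[OF C C', of "zpoly W" "zpoly V"] by blast
qed

end
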